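(* For every $n\ge0$, $$\sum_{k=0}^n(-1)^kB_{n,k}=2^nE_n,$$ where $B_{n,k}=\sum_{j=0}^{n-k}(-1)^{n-k-j}\binom{n+1}{n-k-j}(2j+1)^n$ and $E_n$ are the Euler numbers defined by $\sum_{n\ge0}E_n\frac{z^n}{n!}=\frac{1}{\cosh z}$. *)

theory Defs
  imports "HOL-Computational_Algebra.Formal_Power_Series"
begin

definition fps_cosh :: "real fps" where
  "fps_cosh = (fps_exp 1 + fps_exp (-1)) / 2"

definition euler_num :: "nat \<Rightarrow> real" where
  "euler_num n = fact n * fps_nth (inverse fps_cosh) n"

definition B_coeff :: "nat \<Rightarrow> nat \<Rightarrow> int" where
  "B_coeff n k = (\<Sum>j=0..n-k. (-1)^(n-k-j) * int ((n+1) choose (n-k-j)) * (2*int j+1)^n)"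

end

theory Submission
  imports Defs
begin

text \<open>
  Write cosh z = e^z (1 + Y) with Y = (e^(-2z) - 1)/2. Since Y has no constant term, 1/cosh z
  agrees with e^(-z) (1 - Y + Y^2 - ... + (-Y)^n) up to order n; expanding each (-Y)^i
  binomially writes 2^n E_n as a signed combination of the powers (2l+1)^n with weights
  sum_{i=l..n} 2^(n-i) C(i,l). Exchanging the two summations in the alternating sum of the
  B_{n,k} gives the same powers with weights the partial row sums sum_{m<=n-l} C(n+1,m) of
  Pascal's triangle, and Pascal's rule shows that the two weights coincide.
\<close>

lemma neg_one_power_parity_eq: "even a = even b \<Longrightarrow> (-1 :: 'a::ring_1) ^ a = (-1) ^ b"
  by (simp add: minus_one_power_iff)

lemma sum_nested_swap_le:
  "(\<Sum>i=0..n. \<Sum>l=0..i. f i l) = (\<Sum>l=0..n. \<Sum>i=l..(n::nat). f i l)"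
proof -
  have "(\<Sum>i=0..n. \<Sum>l=0..i. f i l) = (\<Sum>i=0..n. \<Sum>l\<in>{l. l \<in> {0..n} \<and> l \<le> i}. f i l)"
    by (intro sum.cong) auto
  also have "\<dots> = (\<Sum>l=0..n. \<Sum>i\<in>{i. i \<in> {0..n} \<and> l \<le> i}. f i l)"
    by (rule sum.swap_restrict) auto
  also have "\<dots> = (\<Sum>l=0..n. \<Sum>i=l..n. f i l)"
    by (intro sum.cong) auto
  finally show ?thesis .
qed

lemma sum_nested_swap_add_le:
  "(\<Sum>k=0..n. \<Sum>j=0..n-k. f k j) = (\<Sum>j=0..n. \<Sum>k=0..(n::nat)-j. f k j)"
proof -
  have "(\<Sum>k=0..n. \<Sum>j=0..n-k. f k j) = (\<Sum>k=0..n. \<Sum>j\<in>{j. j \<in> {0..n} \<and> k + j \<le> n}. f k j)"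
    by (intro sum.cong) auto
  also have "\<dots> = (\<Sum>j=0..n. \<Sum>k\<in>{k. k \<in> {0..n} \<and> k + j \<le> n}. f k j)"
    by (rule sum.swap_restrict) auto
  also have "\<dots> = (\<Sum>j=0..n. \<Sum>k=0..n-j. f k j)"
    by (intro sum.cong) auto
  finally show ?thesis .
qed

lemma sum_Suc_choose_prefix:
  "(\<Sum>m=0..Suc d. Suc N choose m) = (\<Sum>m=0..Suc d. N choose m) + (\<Sum>m=0..d. N choose m)"
  by (induction d) simp_all

lemma sum_choose_partial_row:
  "(\<Sum>m=0..d. (j + d + 1) choose m) = (\<Sum>i=j..j+d. 2 ^ (j + d - i) * (i choose j))"
proof (induction d)
  case (Suc d)
  have "(\<Sum>m=0..Suc d. (j + Suc d + 1) choose m)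
      = 2 * (\<Sum>m=0..d. (j + d + 1) choose m) + ((j + d + 1) choose Suc d)"
    using sum_Suc_choose_prefix[where d = d and N = "j + d + 1"] by simp
  also have "(j + d + 1) choose Suc d = (j + d + 1) choose j"
    using binomial_symmetric[of "Suc d" "j + d + 1"] by simp
  also have "(\<Sum>i=j..j + Suc d. 2 ^ (j + Suc d - i) * (i choose j))
      = 2 * (\<Sum>i=j..j+d. 2 ^ (j + d - i) * (i choose j)) + ((j + d + 1) choose j)"
    by (simp add: sum_distrib_left Suc_diff_le mult.assoc)
  ultimately show ?case
    using Suc.IH by simp
qed simp

lemma alternating_sum_B_coeff:
  "(\<Sum>k=0..n. (-1) ^ k * B_coeff n k)
     = (\<Sum>j=0..n. (-1) ^ (n + j) * (2 * int j + 1) ^ n * int (\<Sum>m=0..n-j. (n + 1) choose m))"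
proof -
  have "(\<Sum>k=0..n. (-1) ^ k * B_coeff n k) = (\<Sum>k=0..n. \<Sum>j=0..n-k.
      (-1) ^ k * (-1) ^ (n - k - j) * int ((n + 1) choose (n - k - j)) * (2 * int j + 1) ^ n)"
    by (simp add: B_coeff_def sum_distrib_left mult.assoc)
  also have "\<dots> = (\<Sum>j=0..n. \<Sum>k=0..n-j.
      (-1) ^ k * (-1) ^ (n - k - j) * int ((n + 1) choose (n - k - j)) * (2 * int j + 1) ^ n)"
    by (rule sum_nested_swap_add_le)
  also have "\<dots> = (\<Sum>j=0..n. \<Sum>k=0..n-j.
      (-1) ^ (n + j) * (2 * int j + 1) ^ n * int ((n + 1) choose (n - j - k)))"
  proof (intro sum.cong refl)
    fix j k assume "j \<in> {0..n}" "k \<in> {0..n - j}"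
    then have "(-1::int) ^ k * (-1) ^ (n - k - j) = (-1) ^ (n + j)"
      unfolding power_add[symmetric] by (intro neg_one_power_parity_eq) auto
    then show "(-1) ^ k * (-1) ^ (n - k - j) * int ((n + 1) choose (n - k - j)) * (2 * int j + 1) ^ n
        = (-1) ^ (n + j) * (2 * int j + 1) ^ n * int ((n + 1) choose (n - j - k))"
      by (simp add: mult_ac add.commute)
  qed
  also have "\<dots> = (\<Sum>j=0..n. (-1) ^ (n + j) * (2 * int j + 1) ^ n * int (\<Sum>m=0..n-j. (n + 1) choose m))"
    using sum.atLeastAtMost_rev[of "\<lambda>m. (n + 1) choose m" 0]
    by (simp add: sum_distrib_left)
  finally show ?thesis .
qed

lemma fps_power_nth_eq_0:
  fixes f :: "'a::idom fps"
  assumes "fps_nth f 0 = 0" and "k < m"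
  shows "fps_nth (f ^ m) k = 0"
proof (cases "f = 0")
  case False
  then have "subdegree f \<ge> 1"
    using assms(1) by (metis less_one not_le nth_subdegree_nonzero)
  then show ?thesis
    using assms(2) by (intro fps_pow_nth_below_subdegree) (simp add: less_le_trans)
qed (use assms(2) in \<open>simp add: power_0_left\<close>)

lemma fps_mult_inverse_one_plus_nth:
  fixes f g :: "'a::field fps"
  assumes "fps_nth f 0 = 0"
  shows "fps_nth (g * inverse (1 + f)) n = fps_nth (g * (\<Sum>i=0..n. (-f) ^ i)) n"
proof -
  define P where "P = (\<Sum>i=0..n. (-f) ^ i)"
  have geom: "(1 + f) * P + (-f) ^ Suc n = 1"
    using sum_gp_multiplied[of 0 n "-f"] by (simp add: P_def)
  have "inverse (1 + f) * (1 + f) = 1"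
    using assms by (intro inverse_mult_eq_1) simp
  then have inv: "inverse (1 + f) = P + inverse (1 + f) * (-f) ^ Suc n"
    by (metis geom distrib_left mult.assoc mult.left_neutral mult.right_neutral)
  have high: "fps_nth ((-f) ^ Suc n) j = 0" if "j \<le> n" for j
    using assms that by (intro fps_power_nth_eq_0) auto
  have "fps_nth (inverse (1 + f) * (-f) ^ Suc n) k = 0" if "k \<le> n" for k
    unfolding fps_mult_nth using that by (auto intro!: sum.neutral simp: high simp del: power_Suc)
  then have "fps_nth (inverse (1 + f)) k = fps_nth P k" if "k \<le> n" for k
    using that by (subst inv) (simp del: power_Suc)
  then show ?thesis
    unfolding P_def fps_mult_nth by (intro sum.cong) auto
qed

lemma fps_exp_mult_power_exp_minus_one:
  fixes c d :: "'a::field_char_0"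
  shows "fps_exp c * (fps_exp d - 1) ^ i
    = (\<Sum>l=0..i. fps_const (of_nat (i choose l) * (-1) ^ (i - l)) * fps_exp (c + of_nat l * d))"
proof -
  have "(fps_exp d - 1) ^ i = (\<Sum>l=0..i. of_nat (i choose l) * fps_exp d ^ l * (-1) ^ (i - l))"
    using binomial_ring[of "fps_exp d" "-1" i] by (simp add: atMost_atLeast0)
  moreover have "(-1 :: 'a fps) = fps_const (-1)"
    by (metis fps_const_1_eq_1 fps_const_neg)
  ultimately show ?thesis
    by (simp add: sum_distrib_left fps_exp_power_mult fps_exp_add_mult fps_of_nat[symmetric]
        fps_const_mult[symmetric] mult_ac del: fps_const_mult)
qed

lemma fps_cosh_eq: "fps_cosh = fps_exp 1 * (1 + fps_const (1/2) * (fps_exp (-2) - 1))"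
proof -
  have "fps_exp 1 * fps_exp (-2) = fps_exp (-1 :: real)"
    by (simp flip: fps_exp_add_mult)
  then show ?thesis
    by (simp add: fps_cosh_def algebra_simps fps_divide_unit fps_numeral_fps_const)
qed

lemma euler_num_eq_double_sum:
  "euler_num n = (\<Sum>i=0..n. \<Sum>l=0..i.
     (-1/2) ^ i * real (i choose l) * (-1) ^ (i - l) * (-(2 * real l + 1)) ^ n)"
proof -
  define Y :: "real fps" where "Y = fps_const (1/2) * (fps_exp (-2) - 1)"
  have "inverse fps_cosh = fps_exp (-1) * inverse (1 + Y)"
    by (simp only: fps_cosh_eq Y_def fps_inverse_mult fps_exp_neg[of 1])
  then have "fps_nth (inverse fps_cosh) n = fps_nth (fps_exp (-1) * (\<Sum>i=0..n. (-Y) ^ i)) n"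
    by (simp add: fps_mult_inverse_one_plus_nth Y_def)
  also have "fps_exp (-1) * (\<Sum>i=0..n. (-Y) ^ i)
      = (\<Sum>i=0..n. fps_const ((-1/2) ^ i) * (fps_exp (-1) * (fps_exp (-2) - 1) ^ i))"
    by (simp add: Y_def sum_distrib_left power_mult_distrib mult_ac minus_mult_left)
  finally show ?thesis
    by (simp add: euler_num_def fps_exp_mult_power_exp_minus_one fps_sum_nth sum_distrib_left
        algebra_simps)
qed

lemma two_power_euler_num:
  "2 ^ n * euler_num n = (\<Sum>l=0..n.
     (-1) ^ (n + l) * (2 * real l + 1) ^ n * real (\<Sum>i=l..n. 2 ^ (n - i) * (i choose l)))"
proof -
  have summand: "2 ^ n * ((-1/2) ^ i * real (i choose l) * (-1) ^ (i - l) * (-(2 * real l + 1)) ^ n)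
      = (-1) ^ (n + l) * (2 * real l + 1) ^ n * (2 ^ (n - i) * real (i choose l))"
    if "l \<le> i" "i \<le> n" for i l
  proof -
    have "(2::real) ^ n * (-1/2) ^ i = 2 ^ (n - i) * (2 * (-1/2)) ^ i"
      using that by (simp only: power_mult_distrib mult.assoc flip: power_add) (simp flip: power_add)
    then have two_power: "(2::real) ^ n * (-1/2) ^ i = 2 ^ (n - i) * (-1) ^ i"
      by simp
    have sign: "(-1::real) ^ i * (-1) ^ (i - l) * (-1) ^ n = (-1) ^ (n + l)"
      unfolding power_add[symmetric] using that by (intro neg_one_power_parity_eq) presburger
    have "2 ^ n * ((-1/2) ^ i * real (i choose l) * (-1) ^ (i - l) * (-(2 * real l + 1)) ^ n)
        = (2 ^ n * (-1/2) ^ i) * (-1) ^ (i - l) * (-1) ^ n * ((2 * real l + 1) ^ n * real (i choose l))"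
      unfolding power_minus[of "2 * real l + 1"] by (simp only: mult_ac)
    also have "\<dots> = ((-1) ^ i * (-1) ^ (i - l) * (-1) ^ n) * (2 * real l + 1) ^ n * (2 ^ (n - i) * real (i choose l))"
      by (simp only: two_power mult_ac)
    finally show ?thesis
      by (simp only: sign)
  qed
  have "2 ^ n * euler_num n = (\<Sum>i=0..n. \<Sum>l=0..i.
      (-1) ^ (n + l) * (2 * real l + 1) ^ n * (2 ^ (n - i) * real (i choose l)))"
    unfolding euler_num_eq_double_sum sum_distrib_left by (intro sum.cong refl summand) auto
  also have "\<dots> = (\<Sum>l=0..n. \<Sum>i=l..n.
      (-1) ^ (n + l) * (2 * real l + 1) ^ n * (2 ^ (n - i) * real (i choose l)))"
    by (rule sum_nested_swap_le)
  finally show ?thesis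
    by (simp add: sum_distrib_left)
qed

theorem corollary6p2:
  fixes n :: nat
  shows "real_of_int (\<Sum>k=0..n. (-1)^k * B_coeff n k) = 2^n * euler_num n"
proof -
  have partial_row: "(\<Sum>m=0..n-j. (n + 1) choose m) = (\<Sum>i=j..n. 2 ^ (n - i) * (i choose j))"
    if "j \<le> n" for j
    using sum_choose_partial_row[of j "n - j"] that by simp
  have "(\<Sum>k=0..n. (-1)^k * B_coeff n k)
      = (\<Sum>j=0..n. (-1) ^ (n + j) * (2 * int j + 1) ^ n * int (\<Sum>i=j..n. 2 ^ (n - i) * (i choose j)))"
    unfolding alternating_sum_B_coeff by (intro sum.cong refl) (simp only: partial_row atLeastAtMost_iff)
  then show ?thesis
    unfolding two_power_euler_num by simp
qed

end
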